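(* For a finite set $R$ of pairs $(r,s)$ of extended regular expressions (read as inequalities $r\mathrel{\dot\sqsubseteq}s$), define \[F(R)=R\cup\{(\nabla_A(r),\Delta_A(s))\mid (r,s)\in R,\ A\in\mathrm{next}(r)\ltimes\mathrm{next}(s),\ A\neq\emptyset\}.\] Then for all extended regular expressions $r,s$, the set $\bigcup_{i\in\mathbb N}F^{(i)}(\{(r,s)\})$ contains only finitely many pairs up to componentwise similarity.
   Context: $\Sigma$ is a countable (possibly infinite) alphabet. Literals are sets of symbols drawn from a fixed family $U\subseteq\mathcal P(\Sigma)$ containing $\emptyset$, $\Sigma$ and all singletons and closed under union, intersection and complement $\overline{A}=\Sigma\setminus A$. Extended regular expressions (EREs) are generated by $r,s ::= \epsilon \mid A \mid r+s \mid r\cdot s \mid r^* \mid r\,\&\,s \mid \neg r$ with $A$ a literal; the empty literal is written $\emptyset$. Similarity is the smallest congruence on EREs containing $r+s\sim s+r$, $(r+s)+t\sim r+(s+t)$, $r+r\sim r$ and $r+\emptyset\sim r$. Nullability: $\nu(\epsilon)=\nu(r^* )=\mathit{true}$, $\nu(A)=\mathit{false}$, $\nu(r+s)=\nu(r)\vee\nu(s)$, $\nu(r\cdot s)=\nu(r\&s)=\nu(r)\wedge\nu(s)$, $\nu(\neg r)=\neg\nu(r)$. Positive and negative derivatives with respect to a nonempty literal $B$, by simultaneous recursion: $\Delta_B(\epsilon)=\nabla_B(\epsilon)=\emptyset$; $\Delta_B(A)=\epsilon$ if $A\cap B\neq\emptyset$, else $\emptyset$; $\nabla_B(A)=\epsilon$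 if $B\subseteq A$, else $\emptyset$; for $\square\in\{\Delta,\nabla\}$: $\square_B(r+s)=\square_B(r)+\square_B(s)$, $\square_B(r\cdot s)=\square_B(r)\cdot s+\square_B(s)$ if $\nu(r)$ and $\square_B(r)\cdot s$ otherwise, $\square_B(r^* )=\square_B(r)\cdot r^*$, $\square_B(r\&s)=\square_B(r)\&\square_B(s)$; $\Delta_B(\neg r)=\neg\nabla_B(r)$, $\nabla_B(\neg r)=\neg\Delta_B(r)$. Join: $\mathfrak L_1\Join\mathfrak L_2=\{A_1\cap A_2,\ A_1\cap\overline{\bigcup\mathfrak L_2},\ \overline{\bigcup\mathfrak L_1}\cap A_2 \mid A_1\in\mathfrak L_1, A_2\in\mathfrak L_2\}$; left join $\mathfrak L_1\ltimes\mathfrak L_2=\{A_1\cap A_2,\ A_1\cap\overline{\bigcup\mathfrak L_2}\mid A_1\in\mathfrak L_1, A_2\in\mathfrak L_2\}$; $\mathfrak L_1\sqcap\mathfrak L_2=\{A_1\cap A_2\mid A_1\in\mathfrak L_1,A_2\in\mathfrak L_2\}$. Next literals: $\mathrm{next}(\epsilon)=\{\emptyset\}$; $\mathrm{next}(A)=\{A\}$; $\mathrm{next}(r+s)=\mathrm{next}(r)\Join\mathrm{next}(s)$; $\mathrm{next}(r\cdot s)=\mathrm{next}(r)\Join\mathrm{next}(s)$ if $\nu(r)$ and $\mathrm{next}(r)$ otherwise; $\mathrm{next}(r^* )=\mathrm{next}(r)$; $\mathrm{next}(r\&s)=\mathrm{next}(r)\sqcap\mathrm{next}(s)$; $\mathrm{next}(\neg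 r)=\mathrm{next}(r)\cup\{\bigcap_{A\in\mathrm{next}(r)}\overline{A}\}$. *)

theory Defs
  imports "HOL-Library.Countable"
begin

datatype 'a ere = Eps | Lit "'a set" | Plus "'a ere" "'a ere" | Times "'a ere" "'a ere"
  | Star "'a ere" | Inter "'a ere" "'a ere" | Neg "'a ere"

fun lits :: "'a ere \<Rightarrow> 'a set set" where
  "lits Eps = {}"
| "lits (Lit A) = {A}"
| "lits (Plus r s) = lits r \<union> lits s"
| "lits (Times r s) = lits r \<union> lits s"
| "lits (Star r) = lits r"
| "lits (Inter r s) = lits r \<union> lits s"
| "lits (Neg r) = lits r"

definition literal_family :: "'a set set \<Rightarrow> bool" where
  "literal_family U \<longleftrightarrow> {} \<in> U \<and> UNIV \<in> U \<and> (\<forall>a. {a} \<in> U) \<and>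
     (\<forall>A\<in>U. \<forall>B\<in>U. A \<union> B \<in> U \<and> A \<inter> B \<in> U) \<and> (\<forall>A\<in>U. - A \<in> U)"

inductive sim :: "'a ere \<Rightarrow> 'a ere \<Rightarrow> bool" where
  sim_refl: "sim r r"
| sim_sym: "sim r s \<Longrightarrow> sim s r"
| sim_trans: "sim r s \<Longrightarrow> sim s t \<Longrightarrow> sim r t"
| sim_comm: "sim (Plus r s) (Plus s r)"
| sim_assoc: "sim (Plus (Plus r s) t) (Plus r (Plus s t))"
| sim_idem: "sim (Plus r r) r"
| sim_unit: "sim (Plus r (Lit {})) r"
| sim_Plus: "sim r r' \<Longrightarrow> sim s s' \<Longrightarrow> sim (Plus r s) (Plus r' s')"
| sim_Times: "sim r r' \<Longrightarrow> sim s s' \<Longrightarrow> sim (Times r s) (Times r' s')"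
| sim_Inter: "sim r r' \<Longrightarrow> sim s s' \<Longrightarrow> sim (Inter r s) (Inter r' s')"
| sim_Star: "sim r r' \<Longrightarrow> sim (Star r) (Star r')"
| sim_Neg: "sim r r' \<Longrightarrow> sim (Neg r) (Neg r')"

fun nullable :: "'a ere \<Rightarrow> bool" where
  "nullable Eps = True"
| "nullable (Lit A) = False"
| "nullable (Plus r s) = (nullable r \<or> nullable s)"
| "nullable (Times r s) = (nullable r \<and> nullable s)"
| "nullable (Star r) = True"
| "nullable (Inter r s) = (nullable r \<and> nullable s)"
| "nullable (Neg r) = (\<not> nullable r)"

text \<open>pder B r = positive derivative \<Delta>_B(r); nder B r = negative derivative \<nabla>_B(r).\<close>
fun pder :: "'a set \<Rightarrow> 'a ere \<Rightarrow> 'a ere" and nder :: "'a set \<Rightarrow> 'a ere \<Rightarrow> 'a ere" where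
  "pder B Eps = Lit {}"
| "pder B (Lit A) = (if A \<inter> B \<noteq> {} then Eps else Lit {})"
| "pder B (Plus r s) = Plus (pder B r) (pder B s)"
| "pder B (Times r s) = (if nullable r then Plus (Times (pder B r) s) (pder B s)
                         else Times (pder B r) s)"
| "pder B (Star r) = Times (pder B r) (Star r)"
| "pder B (Inter r s) = Inter (pder B r) (pder B s)"
| "pder B (Neg r) = Neg (nder B r)"
| "nder B Eps = Lit {}"
| "nder B (Lit A) = (if B \<subseteq> A then Eps else Lit {})"
| "nder B (Plus r s) = Plus (nder B r) (nder B s)"
| "nder B (Times r s) = (if nullable r then Plus (Times (nder B r) s) (nder B s)
                         else Times (nder B r) s)"
| "nder B (Star r) = Times (nder B r) (Star r)"
| "nder B (Inter r s) = Inter (nder B r) (nder B s)"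
| "nder B (Neg r) = Neg (pder B r)"

definition join :: "'a set set \<Rightarrow> 'a set set \<Rightarrow> 'a set set" where
  "join L1 L2 = {A1 \<inter> A2 | A1 A2. A1 \<in> L1 \<and> A2 \<in> L2}
     \<union> {A1 \<inter> - \<Union>L2 | A1 A2. A1 \<in> L1 \<and> A2 \<in> L2}
     \<union> {- \<Union>L1 \<inter> A2 | A1 A2. A1 \<in> L1 \<and> A2 \<in> L2}"

definition ljoin :: "'a set set \<Rightarrow> 'a set set \<Rightarrow> 'a set set" where
  "ljoin L1 L2 = {A1 \<inter> A2 | A1 A2. A1 \<in> L1 \<and> A2 \<in> L2}
     \<union> {A1 \<inter> - \<Union>L2 | A1 A2. A1 \<in> L1 \<and> A2 \<in> L2}"

definition meet :: "'a set set \<Rightarrow> 'a set set \<Rightarrow> 'a set set" where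
  "meet L1 L2 = {A1 \<inter> A2 | A1 A2. A1 \<in> L1 \<and> A2 \<in> L2}"

fun next_lits :: "'a ere \<Rightarrow> 'a set set" where
  "next_lits Eps = {{}}"
| "next_lits (Lit A) = {A}"
| "next_lits (Plus r s) = join (next_lits r) (next_lits s)"
| "next_lits (Times r s) = (if nullable r then join (next_lits r) (next_lits s) else next_lits r)"
| "next_lits (Star r) = next_lits r"
| "next_lits (Inter r s) = meet (next_lits r) (next_lits s)"
| "next_lits (Neg r) = next_lits r \<union> {\<Inter>A\<in>next_lits r. - A}"

definition F :: "('a ere \<times> 'a ere) set \<Rightarrow> ('a ere \<times> 'a ere) set" where
  "F R = R \<union> {(nder A r, pder A s) | r s A. (r, s) \<in> R \<and>
                 A \<in> ljoin (next_lits r) (next_lits s) \<and> A \<noteq> {}}"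

end

theory Submission
  imports Defs
begin

text \<open>Every pair produced by \<open>F\<close> consists of iterated (positive or negative) derivatives of
  \<open>r\<close> and of \<open>s\<close>, so it suffices that the iterated derivatives of a single expression are finitely
  many up to similarity. This is Brzozowski's argument, by induction on the expression: the
  derivatives of \<open>Plus\<close>, \<open>Inter\<close> and \<open>Neg\<close> are built componentwise from derivatives of the
  arguments, while those of \<open>Times r s\<close> and \<open>Star r\<close> are \<open>Plus\<close>-combinations of finitely many
  shapes, and a \<open>Plus\<close>-combination is determined up to ACI by its set of summands.\<close>

declare sim_trans [trans]

definition finite_mod_sim :: "'a ere set \<Rightarrow> bool" where
  "finite_mod_sim A \<longleftrightarrow> (\<exists>S. finite S \<and> (\<forall>e\<in>A. \<exists>e'\<in>S. sim e e'))"

lemma finite_mod_sim_subset: "A \<subseteq> B \<Longrightarrow> finite_mod_sim B \<Longrightarrow> finite_mod_sim A"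
  unfolding finite_mod_sim_def by blast

lemma finite_imp_finite_mod_sim: "finite A \<Longrightarrow> finite_mod_sim A"
  unfolding finite_mod_sim_def by (blast intro: sim_refl)

lemma finite_mod_sim_Un:
  assumes "finite_mod_sim A" "finite_mod_sim B"
  shows "finite_mod_sim (A \<union> B)"
proof -
  from assms obtain S1 S2 where S1: "finite S1" "\<forall>e\<in>A. \<exists>e'\<in>S1. sim e e'"
    and S2: "finite S2" "\<forall>e\<in>B. \<exists>e'\<in>S2. sim e e'"
    unfolding finite_mod_sim_def by blast
  show ?thesis
    unfolding finite_mod_sim_def using S1 S2 by (intro exI[of _ "S1 \<union> S2"]) blast
qed

lemma finite_mod_sim_image:
  assumes "\<And>a b. sim a b \<Longrightarrow> sim (f a) (f b)" and "finite_mod_sim A"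
  shows "finite_mod_sim (f ` A)"
proof -
  from assms(2) obtain S where S: "finite S" "\<forall>e\<in>A. \<exists>e'\<in>S. sim e e'"
    unfolding finite_mod_sim_def by blast
  show ?thesis
    unfolding finite_mod_sim_def using S assms(1) by (intro exI[of _ "f ` S"]) blast
qed

lemma finite_mod_sim_pairs:
  assumes "finite_mod_sim A" "finite_mod_sim B"
  shows "\<exists>T. finite T \<and> (\<forall>(p, q) \<in> A \<times> B. \<exists>(p', q') \<in> T. sim p p' \<and> sim q q')"
proof -
  from assms obtain S1 S2 where S1: "finite S1" "\<forall>e\<in>A. \<exists>e'\<in>S1. sim e e'"
    and S2: "finite S2" "\<forall>e\<in>B. \<exists>e'\<in>S2. sim e e'"
    unfolding finite_mod_sim_def by blast
  show ?thesis using S1 S2 by (intro exI[of _ "S1 \<times> S2"]) auto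
qed

lemma finite_mod_sim_image2:
  assumes cong: "\<And>a a' b b'. sim a a' \<Longrightarrow> sim b b' \<Longrightarrow> sim (f a b) (f a' b')"
    and "finite_mod_sim A" "finite_mod_sim B"
  shows "finite_mod_sim {f a b |a b. a \<in> A \<and> b \<in> B}"
proof -
  from finite_mod_sim_pairs[OF assms(2,3)] obtain T where T: "finite T"
    and rep: "\<forall>(p, q) \<in> A \<times> B. \<exists>(p', q') \<in> T. sim p p' \<and> sim q q'"
    by blast
  have "\<exists>e'\<in>case_prod f ` T. sim (f a b) e'" if "a \<in> A" "b \<in> B" for a b
  proof -
    from rep that obtain a' b' where "(a', b') \<in> T" "sim a a'" "sim b b'" by blast
    then have "f a' b' \<in> case_prod f ` T" "sim (f a b) (f a' b')"
      using cong by force+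
    then show ?thesis ..
  qed
  then show ?thesis
    unfolding finite_mod_sim_def using T by blast
qed

inductive_set plus_closure :: "'a ere set \<Rightarrow> 'a ere set" for X where
  plus_closure_base: "x \<in> X \<Longrightarrow> x \<in> plus_closure X"
| plus_closure_Plus: "a \<in> plus_closure X \<Longrightarrow> b \<in> plus_closure X \<Longrightarrow> Plus a b \<in> plus_closure X"

inductive plus_tree :: "'a ere set \<Rightarrow> 'a ere \<Rightarrow> bool" where
  plus_tree_leaf: "plus_tree {x} x"
| plus_tree_Plus: "plus_tree L1 a \<Longrightarrow> plus_tree L2 b \<Longrightarrow> plus_tree (L1 \<union> L2) (Plus a b)"

lemma plus_tree_absorb_leaf: "plus_tree M b \<Longrightarrow> x \<in> M \<Longrightarrow> sim (Plus b x) b"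
proof (induction rule: plus_tree.induct)
  case (plus_tree_leaf y)
  then show ?case using sim_idem[of y] by simp
next
  case (plus_tree_Plus L1 b1 L2 b2)
  show ?case
  proof (cases "x \<in> L1")
    case True
    have "sim (Plus (Plus b1 b2) x) (Plus b1 (Plus b2 x))" by (rule sim_assoc)
    also have "sim \<dots> (Plus b1 (Plus x b2))" by (rule sim_Plus[OF sim_refl sim_comm])
    also have "sim \<dots> (Plus (Plus b1 x) b2)" by (rule sim_sym[OF sim_assoc])
    also have "sim \<dots> (Plus b1 b2)" by (rule sim_Plus[OF plus_tree_Plus.IH(1)[OF True] sim_refl])
    finally show ?thesis .
  next
    case False
    with plus_tree_Plus.prems have "x \<in> L2" by blast
    have "sim (Plus (Plus b1 b2) x) (Plus b1 (Plus b2 x))" by (rule sim_assoc)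
    also have "sim \<dots> (Plus b1 b2)" by (rule sim_Plus[OF sim_refl plus_tree_Plus.IH(2)[OF \<open>x \<in> L2\<close>]])
    finally show ?thesis .
  qed
qed

lemma plus_tree_absorb: "plus_tree L a \<Longrightarrow> plus_tree M b \<Longrightarrow> L \<subseteq> M \<Longrightarrow> sim (Plus b a) b"
proof (induction rule: plus_tree.induct)
  case (plus_tree_leaf x)
  then show ?case by (simp add: plus_tree_absorb_leaf)
next
  case (plus_tree_Plus L1 a1 L2 a2)
  have "sim (Plus b (Plus a1 a2)) (Plus (Plus b a1) a2)" by (rule sim_sym[OF sim_assoc])
  also have "sim \<dots> (Plus b a2)" using plus_tree_Plus by (blast intro: sim_Plus sim_refl)
  also have "sim \<dots> b" using plus_tree_Plus by blast
  finally show ?case .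
qed

lemma plus_tree_sim: "plus_tree L a \<Longrightarrow> plus_tree L b \<Longrightarrow> sim a b"
proof -
  assume a: "plus_tree L a" and b: "plus_tree L b"
  have "sim a (Plus a b)" by (rule sim_sym[OF plus_tree_absorb[OF b a order_refl]])
  also have "sim \<dots> (Plus b a)" by (rule sim_comm)
  also have "sim \<dots> b" by (rule plus_tree_absorb[OF a b order_refl])
  finally show ?thesis .
qed

lemma plus_closure_sim_plus_tree:
  "e \<in> plus_closure X \<Longrightarrow> \<forall>x\<in>X. \<exists>y\<in>S. sim x y \<Longrightarrow> \<exists>L e'. L \<subseteq> S \<and> plus_tree L e' \<and> sim e e'"
proof (induction rule: plus_closure.induct)
  case (plus_closure_base x)
  then obtain y where "y \<in> S" "sim x y" by blast
  then show ?case using plus_tree_leaf by blast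
next
  case (plus_closure_Plus a b)
  then obtain L1 a' L2 b' where "L1 \<subseteq> S" "plus_tree L1 a'" "sim a a'"
    and "L2 \<subseteq> S" "plus_tree L2 b'" "sim b b'"
    by blast
  then show ?case
    by (intro exI[of _ "L1 \<union> L2"] exI[of _ "Plus a' b'"]) (auto intro: plus_tree_Plus sim_Plus)
qed

lemma finite_mod_sim_plus_closure:
  assumes "finite_mod_sim X"
  shows "finite_mod_sim (plus_closure X)"
proof -
  from assms obtain S where "finite S" and S: "\<forall>x\<in>X. \<exists>y\<in>S. sim x y"
    unfolding finite_mod_sim_def by blast
  let ?T = "(\<lambda>L. SOME e. plus_tree L e) ` Pow S"
  have "\<exists>e'\<in>?T. sim e e'" if e: "e \<in> plus_closure X" for e
  proof -
    obtain L e' where "L \<subseteq> S" "plus_tree L e'" "sim e e'"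
      using plus_closure_sim_plus_tree[OF e S] by blast
    moreover from \<open>plus_tree L e'\<close> have "plus_tree L (SOME e. plus_tree L e)" by (rule someI)
    ultimately show ?thesis by (blast intro: sim_trans plus_tree_sim)
  qed
  with \<open>finite S\<close> show ?thesis
    unfolding finite_mod_sim_def by blast
qed

inductive_set derivs :: "'a ere \<Rightarrow> 'a ere set" for r where
  derivs_self: "r \<in> derivs r"
| derivs_pder: "e \<in> derivs r \<Longrightarrow> pder B e \<in> derivs r"
| derivs_nder: "e \<in> derivs r \<Longrightarrow> nder B e \<in> derivs r"

definition deriv_closed :: "'a ere set \<Rightarrow> bool" where
  "deriv_closed X \<longleftrightarrow> (\<forall>e\<in>X. \<forall>B. pder B e \<in> X \<and> nder B e \<in> X)"

lemma derivs_least: "r \<in> X \<Longrightarrow> deriv_closed X \<Longrightarrow> derivs r \<subseteq> X"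
proof
  fix e assume "e \<in> derivs r" "r \<in> X" "deriv_closed X"
  then show "e \<in> X" by induction (auto simp: deriv_closed_def)
qed

text \<open>Derivatives distribute over \<open>Plus\<close>, so closedness of a \<open>Plus\<close>-closure is checked on its
  generators.\<close>

lemma deriv_closed_plus_closure:
  assumes "\<And>x B. x \<in> X \<Longrightarrow> pder B x \<in> plus_closure X \<and> nder B x \<in> plus_closure X"
  shows "deriv_closed (plus_closure X)"
proof -
  have "pder B e \<in> plus_closure X \<and> nder B e \<in> plus_closure X" if "e \<in> plus_closure X" for e B
    using that
  proof induction
    case (plus_closure_base x)
    then show ?case by (rule assms)
  next
    case (plus_closure_Plus a b)
    then show ?case by (simp add: plus_closure.plus_closure_Plus)
  qed
  then show ?thesis unfolding deriv_closed_def by blast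
qed

lemma derivs_Plus_subset: "derivs (Plus r s) \<subseteq> {Plus a b |a b. a \<in> derivs r \<and> b \<in> derivs s}"
  by (rule derivs_least) (auto simp: deriv_closed_def intro: derivs.intros)

lemma derivs_Inter_subset: "derivs (Inter r s) \<subseteq> {Inter a b |a b. a \<in> derivs r \<and> b \<in> derivs s}"
  by (rule derivs_least) (auto simp: deriv_closed_def intro: derivs.intros)

lemma derivs_Neg_subset: "derivs (Neg r) \<subseteq> Neg ` derivs r"
  by (rule derivs_least) (auto simp: deriv_closed_def intro: derivs.intros)

lemma derivs_Times_subset:
  "derivs (Times r s) \<subseteq> plus_closure ((\<lambda>a. Times a s) ` derivs r \<union> derivs s)"
proof (rule derivs_least)
  let ?X = "(\<lambda>a. Times a s) ` derivs r \<union> derivs s"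
  have left: "Times a s \<in> plus_closure ?X" if "a \<in> derivs r" for a
    using that by (blast intro: plus_closure_base)
  have right: "b \<in> plus_closure ?X" if "b \<in> derivs s" for b
    using that by (blast intro: plus_closure_base)
  show "Times r s \<in> plus_closure ?X" by (rule left[OF derivs_self])
  show "deriv_closed (plus_closure ?X)"
  proof (rule deriv_closed_plus_closure)
    fix x B assume "x \<in> ?X"
    then consider a where "a \<in> derivs r" "x = Times a s" | "x \<in> derivs s" by blast
    then show "pder B x \<in> plus_closure ?X \<and> nder B x \<in> plus_closure ?X"
    proof cases
      case 1
      then show ?thesis
        by (auto intro!: plus_closure_Plus left[OF derivs_pder] left[OF derivs_nder]
            right[OF derivs_pder] right[OF derivs_nder] derivs_self)
    next
      case 2
      then show ?thesis by (blast intro: right derivs_pder derivs_nder)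
    qed
  qed
qed

lemma derivs_Star_subset:
  "derivs (Star r) \<subseteq> plus_closure (insert (Star r) ((\<lambda>a. Times a (Star r)) ` derivs r))"
proof (rule derivs_least)
  let ?X = "insert (Star r) ((\<lambda>a. Times a (Star r)) ` derivs r)"
  have leaf: "Times a (Star r) \<in> plus_closure ?X" if "a \<in> derivs r" for a
    using that by (blast intro: plus_closure_base)
  show "Star r \<in> plus_closure ?X" by (blast intro: plus_closure_base)
  show "deriv_closed (plus_closure ?X)"
  proof (rule deriv_closed_plus_closure)
    fix x B assume "x \<in> ?X"
    then show "pder B x \<in> plus_closure ?X \<and> nder B x \<in> plus_closure ?X"
      by (auto intro!: plus_closure_Plus leaf[OF derivs_pder] leaf[OF derivs_nder] derivs_self)
  qed
qed

lemma finite_mod_sim_derivs: "finite_mod_sim (derivs r)"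
proof (induction r)
  case Eps
  have "derivs Eps \<subseteq> {Eps, Lit {}}"
    by (rule derivs_least) (auto simp: deriv_closed_def)
  then show ?case by (rule finite_mod_sim_subset) (simp add: finite_imp_finite_mod_sim)
next
  case (Lit A)
  have "derivs (Lit A) \<subseteq> {Lit A, Eps, Lit {}}"
    by (rule derivs_least) (auto simp: deriv_closed_def)
  then show ?case by (rule finite_mod_sim_subset) (simp add: finite_imp_finite_mod_sim)
next
  case (Plus r s)
  show ?case
    by (rule finite_mod_sim_subset[OF derivs_Plus_subset finite_mod_sim_image2[OF sim_Plus Plus.IH]])
next
  case (Times r s)
  have "finite_mod_sim ((\<lambda>a. Times a s) ` derivs r)"
    using Times.IH(1) by (rule finite_mod_sim_image[rotated]) (rule sim_Times[OF _ sim_refl])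
  then have "finite_mod_sim ((\<lambda>a. Times a s) ` derivs r \<union> derivs s)"
    using Times.IH(2) by (rule finite_mod_sim_Un)
  then show ?case
    by (rule finite_mod_sim_subset[OF derivs_Times_subset finite_mod_sim_plus_closure])
next
  case (Star r)
  have "finite_mod_sim ((\<lambda>a. Times a (Star r)) ` derivs r)"
    using Star.IH by (rule finite_mod_sim_image[rotated]) (rule sim_Times[OF _ sim_refl])
  then have "finite_mod_sim (insert (Star r) ((\<lambda>a. Times a (Star r)) ` derivs r))"
    using finite_mod_sim_Un[OF finite_imp_finite_mod_sim[of "{Star r}"]] by simp
  then show ?case
    by (rule finite_mod_sim_subset[OF derivs_Star_subset finite_mod_sim_plus_closure])
next
  case (Inter r s)
  show ?case
    by (rule finite_mod_sim_subset[OF derivs_Inter_subset finite_mod_sim_image2[OF sim_Inter Inter.IH]])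
next
  case (Neg r)
  show ?case
    by (rule finite_mod_sim_subset[OF derivs_Neg_subset finite_mod_sim_image[OF sim_Neg Neg.IH]])
qed

lemma F_subset_derivs: "R \<subseteq> derivs r \<times> derivs s \<Longrightarrow> F R \<subseteq> derivs r \<times> derivs s"
  unfolding F_def by (auto intro: derivs_pder derivs_nder)

lemma funpow_F_subset_derivs: "(F ^^ i) {(r, s)} \<subseteq> derivs r \<times> derivs s"
  by (induction i) (auto intro: derivs_self dest: F_subset_derivs)

theorem theorem5:
  fixes U :: "('a::countable) set set" and r s :: "'a ere"
  assumes "literal_family U" and "lits r \<subseteq> U" and "lits s \<subseteq> U"
  shows "\<exists>T. finite T \<and>
    (\<forall>(p, q) \<in> (\<Union>i. (F ^^ i) {(r, s)}). \<exists>(p', q') \<in> T. sim p p' \<and> sim q q')"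
proof -
  obtain T where "finite T"
    and T: "\<forall>(p, q) \<in> derivs r \<times> derivs s. \<exists>(p', q') \<in> T. sim p p' \<and> sim q q'"
    using finite_mod_sim_pairs[OF finite_mod_sim_derivs finite_mod_sim_derivs] by blast
  have "(\<Union>i. (F ^^ i) {(r, s)}) \<subseteq> derivs r \<times> derivs s"
    by (rule UN_least[OF funpow_F_subset_derivs])
  then have "\<forall>(p, q) \<in> (\<Union>i. (F ^^ i) {(r, s)}). \<exists>(p', q') \<in> T. sim p p' \<and> sim q q'"
    using T by blast
  with \<open>finite T\<close> show ?thesis by blast
qed

end
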